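(* If $\Gamma\vdash^A M:\tau$ and $M\xrightarrow{T}N$, then $\varepsilon\le AT$, i.e. the path $AT$ is positive.
   Context: Calculus $\lambda^{\triangleright}$. Transition variables $\alpha,\beta,\dots$; a transition (stage) $A,B$ is a finite sequence of transition variables ($\varepsilon$ empty, $AB$ concatenation). Types $\tau ::= b \mid \tau\to\tau \mid \triangleright_\alpha\tau \mid \forall\alpha.\tau$; terms $M ::= x \mid M\,M \mid \lambda x{:}\tau.M \mid \blacktriangleright_\alpha M \mid \blacktriangleleft_\alpha M \mid \Lambda\alpha.M \mid M\,A$ (quotation, unquotation, transition abstraction, instantiation). For $A=\alpha_1\cdots\alpha_n$: $\triangleright_A\tau=\triangleright_{\alpha_1}\cdots\triangleright_{\alpha_n}\tau$, $\blacktriangleright_A M=\blacktriangleright_{\alpha_1}\cdots\blacktriangleright_{\alpha_n}M$, $\blacktriangleleft_A M=\blacktriangleleft_{\alpha_n}\cdots\blacktriangleleft_{\alpha_1}M$ (identity for $A=\varepsilon$). Substitutions $M[x:=N]$, and $\tau[\alpha:=B]$, $M[\alpha:=B]$ (replacing $\alpha$ by $B$ in transitions and $\triangleright_\alpha,\blacktriangleright_\alpha,\blacktriangleleft_\alpha$ by $\triangleright_B,\blacktriangleright_B,\blacktriangleleft_B$) are capture-avoiding. A context $\Gamma$ is a finite set $\{x_i:\tau_i@A_i\}$ with distinct $x_i$; FTV denotes free transition variables. Typing $\Gamma\vdash^A M:\tau$: (Var) $x:\tau@A\in\Gamma\Rightarrow\Gamma\vdash^Ax:\tau$; (Abs) $\Gamma,x:\tau@A\vdash^AM:\sigma\Rightarrow\Gamma\vdash^A\lambda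 x{:}\tau.M:\tau\to\sigma$; (App) from $\Gamma\vdash^AM:\tau\to\sigma$, $\Gamma\vdash^AN:\tau$ infer $\Gamma\vdash^AMN:\sigma$; (Quote) $\Gamma\vdash^{A\alpha}M:\tau\Rightarrow\Gamma\vdash^A\blacktriangleright_\alpha M:\triangleright_\alpha\tau$; (Unquote) $\Gamma\vdash^AM:\triangleright_\alpha\tau\Rightarrow\Gamma\vdash^{A\alpha}\blacktriangleleft_\alpha M:\tau$; (Gen) $\Gamma\vdash^AM:\tau$, $\alpha\notin\mathrm{FTV}(\Gamma)\cup\mathrm{FTV}(A)$ $\Rightarrow\Gamma\vdash^A\Lambda\alpha.M:\forall\alpha.\tau$; (Ins) $\Gamma\vdash^AM:\forall\alpha.\tau\Rightarrow\Gamma\vdash^AM\,B:\tau[\alpha:=B]$. Paths $T,U$ are elements of the free group generated by the transition variables (reduced words in $\alpha$ and formal inverses $\alpha^{-1}$); $TU$ is the group product, $\varepsilon$ the unit; transitions are identified with inverse-free paths, called positive. $T\le U$ iff $TA=U$ for some positive $A$; thus $\varepsilon\le T$ iff $T$ is positive. $T[\alpha:=\varepsilon]$ is the group homomorphic image of $T$ sending $\alpha$ to $\varepsilon$ and fixing other generators. Annotated reduction $M\xrightarrow{T}N$ is inductively defined by: $(\lambda x{:}\tau.M)N\xrightarrow{\varepsilon}M[x:=N]$; $(\Lambda\alpha.M)A\xrightarrow{\varepsilon}M[\alpha:=A]$; $\blacktriangleleft_\alpha\blacktriangleright_\alpha M\xrightarrow{\alpha^{-1}}M$; if $M\xrightarrow{T}M'$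 then $\lambda x{:}\tau.M\xrightarrow{T}\lambda x{:}\tau.M'$, $MN\xrightarrow{T}M'N$, $NM\xrightarrow{T}NM'$, $M\,A\xrightarrow{T}M'\,A$, $\blacktriangleright_\alpha M\xrightarrow{\alpha T}\blacktriangleright_\alpha M'$, $\blacktriangleleft_\alpha M\xrightarrow{\alpha^{-1}T}\blacktriangleleft_\alpha M'$, and $\Lambda\alpha.M\xrightarrow{T[\alpha:=\varepsilon]}\Lambda\alpha.M'$. *)

theory Defs
  imports Main
begin

text \<open>Terms and types are represented in locally nameless style, so that they are
identified up to alpha-equivalence: bound (term or transition) variables are
de Bruijn indices, free ones are names (natural numbers).\<close>

datatype tatom = TF nat | TB nat

datatype ty =
    TBase nat
  | TArr ty ty
  | TLater tatom ty
  | TAll ty              \<comment> \<open>forall alpha. tau (binds transition index 0)\<close>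

datatype tm =
    Var nat
  | BVar nat
  | App tm tm
  | Lam ty tm            \<comment> \<open>lambda x:tau. M (binds term index 0)\<close>
  | Quo tatom tm
  | Unq tatom tm
  | TLam tm              \<comment> \<open>Lambda alpha. M (binds transition index 0)\<close>
  | TApp tm "tatom list"

fun laters :: "tatom list \<Rightarrow> ty \<Rightarrow> ty" where
  "laters [] t = t"
| "laters (a # as) t = TLater a (laters as t)"

fun quos :: "tatom list \<Rightarrow> tm \<Rightarrow> tm" where
  "quos [] M = M"
| "quos (a # as) M = Quo a (quos as M)"

text \<open>unquotation along A = a1...an is Unq an (... (Unq a1 M))\<close>
definition unqs :: "tatom list \<Rightarrow> tm \<Rightarrow> tm" where
  "unqs B M = foldl (\<lambda>N a. Unq a N) M B"

fun open_ty :: "nat \<Rightarrow> tatom list \<Rightarrow> ty \<Rightarrow> ty" where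
  "open_ty k B (TBase b) = TBase b"
| "open_ty k B (TArr s t) = TArr (open_ty k B s) (open_ty k B t)"
| "open_ty k B (TLater a t) =
     (if a = TB k then laters B (open_ty k B t) else TLater a (open_ty k B t))"
| "open_ty k B (TAll t) = TAll (open_ty (Suc k) B t)"

fun open_tr :: "nat \<Rightarrow> tatom list \<Rightarrow> tm \<Rightarrow> tm" where
  "open_tr k B (Var x) = Var x"
| "open_tr k B (BVar i) = BVar i"
| "open_tr k B (App M N) = App (open_tr k B M) (open_tr k B N)"
| "open_tr k B (Lam t M) = Lam (open_ty k B t) (open_tr k B M)"
| "open_tr k B (Quo a M) =
     (if a = TB k then quos B (open_tr k B M) else Quo a (open_tr k B M))"
| "open_tr k B (Unq a M) =
     (if a = TB k then unqs B (open_tr k B M) else Unq a (open_tr k B M))"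
| "open_tr k B (TLam M) = TLam (open_tr (Suc k) B M)"
| "open_tr k B (TApp M C) =
     TApp (open_tr k B M) (concat (map (\<lambda>a. if a = TB k then B else [a]) C))"

fun open_tm :: "nat \<Rightarrow> tm \<Rightarrow> tm \<Rightarrow> tm" where
  "open_tm k N (Var x) = Var x"
| "open_tm k N (BVar i) = (if i = k then N else BVar i)"
| "open_tm k N (App M1 M2) = App (open_tm k N M1) (open_tm k N M2)"
| "open_tm k N (Lam t M) = Lam t (open_tm (Suc k) N M)"
| "open_tm k N (Quo a M) = Quo a (open_tm k N M)"
| "open_tm k N (Unq a M) = Unq a (open_tm k N M)"
| "open_tm k N (TLam M) = TLam (open_tm k N M)"
| "open_tm k N (TApp M C) = TApp (open_tm k N M) C"

fun ftv_atom :: "tatom \<Rightarrow> nat set" where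
  "ftv_atom (TF a) = {a}"
| "ftv_atom (TB i) = {}"

fun ftv_ty :: "ty \<Rightarrow> nat set" where
  "ftv_ty (TBase b) = {}"
| "ftv_ty (TArr s t) = ftv_ty s \<union> ftv_ty t"
| "ftv_ty (TLater a t) = ftv_atom a \<union> ftv_ty t"
| "ftv_ty (TAll t) = ftv_ty t"

fun ftv_tm :: "tm \<Rightarrow> nat set" where
  "ftv_tm (Var x) = {}"
| "ftv_tm (BVar i) = {}"
| "ftv_tm (App M N) = ftv_tm M \<union> ftv_tm N"
| "ftv_tm (Lam t M) = ftv_ty t \<union> ftv_tm M"
| "ftv_tm (Quo a M) = ftv_atom a \<union> ftv_tm M"
| "ftv_tm (Unq a M) = ftv_atom a \<union> ftv_tm M"
| "ftv_tm (TLam M) = ftv_tm M"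
| "ftv_tm (TApp M C) = ftv_tm M \<union> (\<Union>a\<in>set C. ftv_atom a)"

fun fv_tm :: "tm \<Rightarrow> nat set" where
  "fv_tm (Var x) = {x}"
| "fv_tm (BVar i) = {}"
| "fv_tm (App M N) = fv_tm M \<union> fv_tm N"
| "fv_tm (Lam t M) = fv_tm M"
| "fv_tm (Quo a M) = fv_tm M"
| "fv_tm (Unq a M) = fv_tm M"
| "fv_tm (TLam M) = fv_tm M"
| "fv_tm (TApp M C) = fv_tm M"

fun lc_atom_at :: "nat \<Rightarrow> tatom \<Rightarrow> bool" where
  "lc_atom_at k (TF a) = True"
| "lc_atom_at k (TB i) = (i < k)"

fun lc_ty_at :: "nat \<Rightarrow> ty \<Rightarrow> bool" where
  "lc_ty_at k (TBase b) = True"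
| "lc_ty_at k (TArr s t) = (lc_ty_at k s \<and> lc_ty_at k t)"
| "lc_ty_at k (TLater a t) = (lc_atom_at k a \<and> lc_ty_at k t)"
| "lc_ty_at k (TAll t) = lc_ty_at (Suc k) t"

abbreviation lc_ty :: "ty \<Rightarrow> bool" where "lc_ty t \<equiv> lc_ty_at 0 t"

text \<open>A context maps each (distinct) variable x_i to its type tau_i and stage A_i.\<close>
type_synonym ctx = "nat \<Rightarrow> (ty \<times> nat list) option"

definition ftv_ctx :: "ctx \<Rightarrow> nat set" where
  "ftv_ctx G = (\<Union>x\<in>dom G. ftv_ty (fst (the (G x))) \<union> set (snd (the (G x))))"

inductive typing :: "ctx \<Rightarrow> nat list \<Rightarrow> tm \<Rightarrow> ty \<Rightarrow> bool" where
  T_Var: "G x = Some (t, A) \<Longrightarrow> lc_ty t \<Longrightarrow> typing G A (Var x) t"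
| T_Abs: "x \<notin> dom G \<Longrightarrow> x \<notin> fv_tm M \<Longrightarrow> lc_ty t \<Longrightarrow>
          typing (G(x \<mapsto> (t, A))) A (open_tm 0 (Var x) M) s \<Longrightarrow>
          typing G A (Lam t M) (TArr t s)"
| T_App: "typing G A M (TArr t s) \<Longrightarrow> typing G A N t \<Longrightarrow> typing G A (App M N) s"
| T_Quote: "typing G (A @ [a]) M t \<Longrightarrow> typing G A (Quo (TF a) M) (TLater (TF a) t)"
| T_Unquote: "typing G A M (TLater (TF a) t) \<Longrightarrow> typing G (A @ [a]) (Unq (TF a) M) t"
| T_Gen: "a \<notin> ftv_ctx G \<Longrightarrow> a \<notin> set A \<Longrightarrow> a \<notin> ftv_tm M \<Longrightarrow> a \<notin> ftv_ty t \<Longrightarrow>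
          typing G A (open_tr 0 [TF a] M) (open_ty 0 [TF a] t) \<Longrightarrow>
          typing G A (TLam M) (TAll t)"
| T_Ins: "typing G A M (TAll t) \<Longrightarrow>
          typing G A (TApp M (map TF B)) (open_ty 0 (map TF B) t)"

text \<open>A path is a reduced word; a letter (a, False) is the generator a and
(a, True) its formal inverse a^-1.\<close>
type_synonym path = "(nat \<times> bool) list"

fun pcons :: "nat \<times> bool \<Rightarrow> path \<Rightarrow> path" where
  "pcons x [] = [x]"
| "pcons x (y # ys) = (if fst x = fst y \<and> snd x \<noteq> snd y then ys else x # y # ys)"

definition pmult :: "path \<Rightarrow> path \<Rightarrow> path" where
  "pmult T U = foldr pcons T U"

definition preduce :: "path \<Rightarrow> path" where
  "preduce w = foldr pcons w []"

definition pos :: "nat list \<Rightarrow> path" where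
  "pos A = map (\<lambda>a. (a, False)) A"

definition path_le :: "path \<Rightarrow> path \<Rightarrow> bool" where
  "path_le T U \<longleftrightarrow> (\<exists>A. pmult T (pos A) = U)"

definition perase :: "nat \<Rightarrow> path \<Rightarrow> path" where
  "perase a T = preduce (filter (\<lambda>l. fst l \<noteq> a) T)"

inductive red :: "tm \<Rightarrow> path \<Rightarrow> tm \<Rightarrow> bool" where
  R_Beta: "red (App (Lam t M) N) [] (open_tm 0 N M)"
| R_TBeta: "red (TApp (TLam M) (map TF B)) [] (open_tr 0 (map TF B) M)"
| R_QU: "red (Unq (TF a) (Quo (TF a) M)) [(a, True)] M"
| R_Lam: "x \<notin> fv_tm M \<Longrightarrow> x \<notin> fv_tm M' \<Longrightarrow>
          red (open_tm 0 (Var x) M) T (open_tm 0 (Var x) M') \<Longrightarrow>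
          red (Lam t M) T (Lam t M')"
| R_AppL: "red M T M' \<Longrightarrow> red (App M N) T (App M' N)"
| R_AppR: "red M T M' \<Longrightarrow> red (App N M) T (App N M')"
| R_TApp: "red M T M' \<Longrightarrow> red (TApp M A) T (TApp M' A)"
| R_Quo: "red M T M' \<Longrightarrow> red (Quo (TF a) M) (pmult [(a, False)] T) (Quo (TF a) M')"
| R_Unq: "red M T M' \<Longrightarrow> red (Unq (TF a) M) (pmult [(a, True)] T) (Unq (TF a) M')"
| R_TLam: "a \<notin> ftv_tm M \<Longrightarrow> a \<notin> ftv_tm M' \<Longrightarrow>
          red (open_tr 0 [TF a] M) T (open_tr 0 [TF a] M') \<Longrightarrow>
          red (TLam M) (perase a T) (TLam M')"

end

theory Submission
  imports Defs
begin

(*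
  Write a path as the reduct of a word
  over the letters alpha and alpha^-1.  The label of a reduction step
  M --T--> N is the reduct of the word of quotations (alpha) and unquotations
  (alpha^-1) crossed on the way from the root of M down to the redex, with
  the letters of variables bound by an enclosing transition abstraction
  erased.  We therefore collect, for every term M, the set of such
  "nesting words" and prove two facts:
   (1) every reduction label of M is the reduct of a nesting word of M;
   (2) if M has type t at stage A, then A w reduces to a positive path for
       every nesting word w of M (a term typed at stage A never unquotes
       below stage epsilon).
  The theorem follows by composing (1) and (2).
*)

fun reduced :: "path \<Rightarrow> bool" where
  "reduced [] = True"
| "reduced [x] = True"
| "reduced (x # y # ys) = (\<not> (fst x = fst y \<and> snd x \<noteq> snd y) \<and> reduced (y # ys))"

lemma pcons_inverse [simp]: "pcons (a, b) ((a, \<not> b) # w) = w"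
  by simp

lemma pcons_other: "y \<noteq> (a, \<not> b) \<Longrightarrow> pcons (a, b) (y # w) = (a, b) # y # w"
  by (cases y; cases b) auto

lemma reduced_tl: "reduced (y # ys) \<Longrightarrow> reduced ys"
  by (cases ys) auto

lemma reduced_pcons: "reduced w \<Longrightarrow> reduced (pcons x w)"
  by (cases w) (auto intro: reduced_tl)

lemma pcons_reduced: "reduced (x # w) \<Longrightarrow> pcons x w = x # w"
  by (cases w) auto

lemma pcons_cancel:
  assumes "reduced w"
  shows "pcons (a, b) (pcons (a, \<not> b) w) = w"
proof (cases w)
  case (Cons y ys)
  show ?thesis
  proof (cases "y = (a, b)")
    case True
    then have w: "w = (a, b) # ys" using Cons by simp
    have "pcons (a, \<not> b) w = ys"
      unfolding w using pcons_inverse[of a "\<not> b" ys] by simp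
    also have "pcons (a, b) ys = w"
      using assms unfolding w by (rule pcons_reduced)
    finally show ?thesis .
  next
    case False
    then have "pcons (a, \<not> b) w = (a, \<not> b) # w"
      unfolding Cons by (intro pcons_other) simp
    then show ?thesis by simp
  qed
qed simp

lemma preduce_Nil [simp]: "preduce [] = []"
  by (simp add: preduce_def)

lemma preduce_Cons [simp]: "preduce (x # w) = pcons x (preduce w)"
  by (simp add: preduce_def)

lemma reduced_preduce: "reduced (preduce w)"
  by (induction w) (auto intro: reduced_pcons)

lemma preduce_append: "preduce (u @ w) = pmult u (preduce w)"
  by (simp add: preduce_def pmult_def)

lemma preduce_cancel: "preduce (u @ (a, b) # (a, \<not> b) # w) = preduce (u @ w)"
  by (simp add: preduce_append pcons_cancel[OF reduced_preduce])

text \<open>Filtering out letters by a predicate that cannot tell a letter from its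
  inverse commutes with reduction; for the predicate "not alpha" this says that
  the erasure T[alpha := epsilon] is a group homomorphism.\<close>
lemma filter_pcons:
  assumes P: "\<And>a b c. P (a, b) = P (a, c)"
  shows "preduce (filter P (pcons x w)) = preduce (filter P (x # w))"
proof (cases w)
  case (Cons y ys)
  obtain a b where x: "x = (a, b)" by fastforce
  show ?thesis
  proof (cases "y = (a, \<not> b)")
    case True
    have "preduce (filter P (x # w)) = preduce (filter P ys)"
    proof (cases "P x")
      case True
      then have "P y" using \<open>y = (a, \<not> b)\<close> x P by metis
      then show ?thesis
        using \<open>P x\<close> Cons x \<open>y = (a, \<not> b)\<close> by (simp add: pcons_cancel[OF reduced_preduce])
    next
      case False
      then have "\<not> P y" using \<open>y = (a, \<not> b)\<close> x P by metis
      then show ?thesis using \<open>\<not> P x\<close> Cons by simp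
    qed
    then show ?thesis using Cons x True by simp
  next
    case False
    then show ?thesis using Cons x pcons_other by simp
  qed
qed simp

lemma filter_preduce:
  assumes "\<And>a b c. P (a, b) = P (a, c)"
  shows "preduce (filter P (preduce w)) = preduce (filter P w)"
  by (induction w) (simp_all add: filter_pcons[where P = P, OF assms])

definition positive :: "path \<Rightarrow> bool" where
  "positive T \<longleftrightarrow> (\<exists>B. T = pos B)"

lemma path_le_Nil_iff_positive: "path_le [] T \<longleftrightarrow> positive T"
  by (auto simp: path_le_def positive_def pmult_def)

lemma preduce_pos: "preduce (pos A) = pos A"
proof (induction A)
  case (Cons a A)
  then show ?case by (cases A) (simp_all add: pos_def)
qed (simp add: pos_def)

lemma filter_pos: "filter (\<lambda>l. fst l \<noteq> a) (pos B) = pos (filter (\<lambda>b. b \<noteq> a) B)"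
  by (simp add: pos_def filter_map o_def)

text \<open>The letter contributed by a quotation (b = False) or an unquotation
  (b = True) on a transition atom; dangling bound atoms contribute nothing.\<close>
fun atom_letter :: "tatom \<Rightarrow> bool \<Rightarrow> path" where
  "atom_letter (TF a) b = [(a, b)]"
| "atom_letter (TB i) b = []"

fun nesting_words :: "tm \<Rightarrow> path set" where
  "nesting_words (Var x) = {[]}"
| "nesting_words (BVar i) = {[]}"
| "nesting_words (App M N) = nesting_words M \<union> nesting_words N"
| "nesting_words (Lam t M) = nesting_words M"
| "nesting_words (Quo a M) = insert [] ((\<lambda>w. atom_letter a False @ w) ` nesting_words M)"
| "nesting_words (Unq a M) = insert [] ((\<lambda>w. atom_letter a True @ w) ` nesting_words M)"
| "nesting_words (TLam M) = nesting_words M"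
| "nesting_words (TApp M C) = nesting_words M"

lemma Nil_in_nesting_words: "[] \<in> nesting_words M"
  by (induction M) auto

lemma nesting_words_open_tm: "nesting_words (open_tm k (Var x) M) = nesting_words M"
  by (induction M arbitrary: k) auto

lemma erase_open_atom_letter:
  assumes "a \<notin> ftv_atom c"
  shows "filter (\<lambda>l. fst l \<noteq> a) (atom_letter (if c = TB k then TF a else c) b) = atom_letter c b"
  using assms by (cases c) auto

lemma open_tr_Quo_single:
  "open_tr k [TF a] (Quo c M) = Quo (if c = TB k then TF a else c) (open_tr k [TF a] M)"
  by simp

lemma open_tr_Unq_single:
  "open_tr k [TF a] (Unq c M) = Unq (if c = TB k then TF a else c) (open_tr k [TF a] M)"
  by (simp add: unqs_def)

lemma filter_image_prefix:
  "filter P ` insert [] ((\<lambda>w. u @ w) ` W) = insert [] ((\<lambda>w. filter P u @ w) ` (filter P ` W))"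
  by (simp add: image_image)

lemma erase_nesting_words_open_tr:
  assumes "a \<notin> ftv_tm M"
  shows "filter (\<lambda>l. fst l \<noteq> a) ` nesting_words (open_tr k [TF a] M) = nesting_words M"
  using assms
proof (induction M arbitrary: k)
  case (Quo c M)
  then have fresh: "a \<notin> ftv_atom c" and IH: "filter (\<lambda>l. fst l \<noteq> a) `
      nesting_words (open_tr k [TF a] M) = nesting_words M"
    by auto
  show ?case
    by (simp only: open_tr_Quo_single nesting_words.simps filter_image_prefix IH
        erase_open_atom_letter[OF fresh])
next
  case (Unq c M)
  then have fresh: "a \<notin> ftv_atom c" and IH: "filter (\<lambda>l. fst l \<noteq> a) `
      nesting_words (open_tr k [TF a] M) = nesting_words M"
    by auto
  show ?case
    by (simp only: open_tr_Unq_single nesting_words.simps filter_image_prefix IH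
        erase_open_atom_letter[OF fresh])
qed (simp_all add: image_Un)

text \<open>The congruence rule for transition abstraction erases
  the bound variable from the label, matching erase_nesting_words_open_tr.\<close>
lemma red_label_nesting_word: "red M T N \<Longrightarrow> \<exists>w \<in> nesting_words M. T = preduce w"
proof (induction rule: red.induct)
  case (R_Beta t M N)
  show ?case using Nil_in_nesting_words by force
next
  case (R_TBeta M B)
  show ?case using Nil_in_nesting_words by force
next
  case (R_QU a M)
  show ?case by (rule bexI[where x = "[(a, True)]"]) (auto simp: Nil_in_nesting_words)
next
  case (R_Quo M T M' a)
  then obtain w where "w \<in> nesting_words M" "T = preduce w" by blast
  then show ?case by (intro bexI[where x = "(a, False) # w"]) (simp_all add: pmult_def)
next
  case (R_Unq M T M' a)
  then obtain w where "w \<in> nesting_words M" "T = preduce w" by blast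
  then show ?case by (intro bexI[where x = "(a, True) # w"]) (simp_all add: pmult_def)
next
  case (R_TLam a M M' T)
  then obtain w where w: "w \<in> nesting_words (open_tr 0 [TF a] M)" "T = preduce w" by blast
  have "perase a T = preduce (filter (\<lambda>l. fst l \<noteq> a) w)"
    using w(2) unfolding perase_def by (simp add: filter_preduce)
  moreover have "filter (\<lambda>l. fst l \<noteq> a) w \<in> nesting_words (TLam M)"
    using erase_nesting_words_open_tr[OF R_TLam.hyps(1), of 0] w(1) by auto
  ultimately show ?case by blast
qed (auto simp: nesting_words_open_tm)

text \<open>Quotation extends the stage by alpha, unquotation cancels the last alpha of
  the stage, and generalisation is handled by erasing the fresh variable.\<close>
lemma typing_stage_positive:
  "typing G A M t \<Longrightarrow> w \<in> nesting_words M \<Longrightarrow> positive (preduce (pos A @ w))"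
proof (induction arbitrary: w rule: typing.induct)
  case (T_Abs x G M t A s)
  then show ?case by (simp add: nesting_words_open_tm)
next
  case (T_Quote G A a M t)
  then consider "w = []" | w0 where "w = (a, False) # w0" "w0 \<in> nesting_words M" by auto
  then show ?case
  proof cases
    case 2
    then have "pos A @ w = pos (A @ [a]) @ w0" by (simp add: pos_def)
    then show ?thesis using T_Quote.IH[OF 2(2)] by (simp only:)
  qed (auto simp: positive_def preduce_pos)
next
  case (T_Unquote G A M a t)
  then consider "w = []" | w0 where "w = (a, True) # w0" "w0 \<in> nesting_words M" by auto
  then show ?case
  proof cases
    case 1
    then show ?thesis by (auto simp: positive_def preduce_pos)
  next
    case 2
    then have "preduce (pos (A @ [a]) @ w) = preduce (pos A @ w0)"
      using preduce_cancel[of "pos A" a False w0] by (simp add: pos_def)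
    then show ?thesis using T_Unquote.IH 2 by simp
  qed
next
  case (T_Gen a G A M t)
  \<comment> \<open>open the body with the fresh alpha, use the hypothesis there and erase
    alpha again; A does not mention alpha, so it survives the erasure\<close>
  let ?erase = "filter (\<lambda>l. fst l \<noteq> a)"
  have "w \<in> ?erase ` nesting_words (open_tr 0 [TF a] M)"
    using erase_nesting_words_open_tr[OF T_Gen.hyps(3), of 0] T_Gen.prems by simp
  then obtain w' where w': "w' \<in> nesting_words (open_tr 0 [TF a] M)" "?erase w' = w"
    by blast
  obtain B where B: "preduce (pos A @ w') = pos B"
    using T_Gen.IH[OF w'(1)] by (auto simp: positive_def)
  have "filter (\<lambda>b. b \<noteq> a) A = A"
    using T_Gen.hyps(2) by (auto simp: filter_id_conv)
  then have "?erase (pos A) = pos A"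
    by (simp only: filter_pos)
  then have "preduce (pos A @ w) = preduce (?erase (pos A @ w'))"
    using w'(2) by simp
  also have "\<dots> = preduce (?erase (preduce (pos A @ w')))"
    by (rule filter_preduce[symmetric]) auto
  also have "\<dots> = pos (filter (\<lambda>b. b \<noteq> a) B)"
    by (simp only: B filter_pos preduce_pos)
  finally show ?case by (auto simp: positive_def)
qed (auto simp: positive_def preduce_pos)

theorem mainTheorem8:
  fixes G :: ctx and A :: "nat list" and M N :: tm and t :: ty and T :: path
  assumes "finite (dom G)"
    and "typing G A M t"
    and "red M T N"
  shows "path_le [] (pmult (pos A) T)"
proof -
  obtain w where w: "w \<in> nesting_words M" "T = preduce w"
    using red_label_nesting_word[OF assms(3)] by blast
  have "pmult (pos A) T = preduce (pos A @ w)"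
    using w(2) by (simp add: preduce_append)
  then show ?thesis
    using typing_stage_positive[OF assms(2) w(1)] by (simp add: path_le_Nil_iff_positive)
qed

end
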